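(* Let $A$ be an associative algebra (with identity) over a field $\mathbf{k}$, let $q\in A$ be an idempotent, let $(A,q):=\{x\in A\mid qxq=qx\}$, and fix $k\in\mathbf{k}$. Then $(A,q)$ is a (right) Leibniz algebra under the bracket $$\langle x,y\rangle_{4,k}:=xy-yx+yqx-xyq+kxqy-kqyx,\qquad x,y\in(A,q),$$ i.e. $\langle\langle x,y\rangle,z\rangle=\langle x,\langle y,z\rangle\rangle+\langle\langle x,z\rangle,y\rangle$ for all $x,y,z\in(A,q)$.
   Context: $(A,q)$ is the (right) invariant algebra induced by the idempotent $q$; it is a subalgebra of $A$. A (right) Leibniz algebra is a vector space with a bilinear operation $\langle\,,\,\rangle$ satisfying $\langle\langle x,y\rangle,z\rangle=\langle x,\langle y,z\rangle\rangle+\langle\langle x,z\rangle,y\rangle$. *)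

theory Defs
  imports Main "HOL.Vector_Spaces"
begin

definition algebra_over :: "('k::field \<Rightarrow> 'a::ring_1 \<Rightarrow> 'a) \<Rightarrow> bool" where
  "algebra_over s \<longleftrightarrow> vector_space s \<and>
     (\<forall>c x y. s c (x * y) = s c x * y) \<and> (\<forall>c x y. s c (x * y) = x * s c y)"

definition inv_alg :: "'a::ring_1 \<Rightarrow> 'a set" where
  "inv_alg q = {x. q * x * q = q * x}"

definition bracket4 :: "('k \<Rightarrow> 'a::ring_1 \<Rightarrow> 'a) \<Rightarrow> 'a \<Rightarrow> 'k \<Rightarrow> 'a \<Rightarrow> 'a \<Rightarrow> 'a" where
  "bracket4 s q k x y = x * y - y * x + y * q * x - x * y * q + s k (x * q * y) - s k (q * y * x)"

end

(* (A,q) is closed under sums, products and scalars and contains q, so the bracket stays in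
   (A,q).  For the Leibniz identity, pull the scalars out of all products and expand: both
   sides become combinations of words in x, y, z, q.  Since q u q = q u for every product u of
   elements of (A,q), every q after the first one in a word can be deleted, and on these
   normal forms the two sides agree term by term. *)

theory Submission
  imports Defs
begin

lemma algebra_over_scale_mult:
  assumes "algebra_over s"
  shows "s c a * b = s c (a * b)" and "a * s c b = s c (a * b)"
  using assms unfolding algebra_over_def by metis+

lemma algebra_over_scale_add_diff:
  assumes "algebra_over s"
  shows "s c (a + b) = s c a + s c b" and "s c (a - b) = s c a - s c b"
  using assms unfolding algebra_over_def
  by (simp_all add: module.scale_right_distrib module.scale_right_diff_distrib
      flip: module_iff_vector_space)

lemma idempotent_in_inv_alg: "q * q = q \<Longrightarrow> q \<in> inv_alg q"
  by (simp add: inv_alg_def)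

lemma inv_alg_mult_closed:
  assumes "a \<in> inv_alg q" and "b \<in> inv_alg q"
  shows "a * b \<in> inv_alg q"
proof -
  have "q * (a * b) * q = (q * a * q) * (b * q)"
    using assms(1) by (simp add: inv_alg_def mult.assoc)
  also have "\<dots> = q * a * (q * b * q)" by (simp add: mult.assoc)
  also have "\<dots> = (q * a * q) * b" using assms(2) by (simp add: inv_alg_def mult.assoc)
  also have "\<dots> = q * (a * b)" using assms(1) by (simp add: inv_alg_def mult.assoc)
  finally show ?thesis by (simp add: inv_alg_def)
qed

lemma inv_alg_add_closed: "a \<in> inv_alg q \<Longrightarrow> b \<in> inv_alg q \<Longrightarrow> a + b \<in> inv_alg q"
  and inv_alg_diff_closed: "a \<in> inv_alg q \<Longrightarrow> b \<in> inv_alg q \<Longrightarrow> a - b \<in> inv_alg q"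
  by (simp_all add: inv_alg_def algebra_simps)

lemma inv_alg_scale_closed:
  assumes "algebra_over s" and "a \<in> inv_alg q"
  shows "s c a \<in> inv_alg q"
  using assms by (simp add: inv_alg_def algebra_over_scale_mult)

lemma bracket4_in_inv_alg:
  assumes "algebra_over s" and "q * q = q" and "x \<in> inv_alg q" and "y \<in> inv_alg q"
  shows "bracket4 s q k x y \<in> inv_alg q"
  unfolding bracket4_def
  by (intro inv_alg_add_closed inv_alg_diff_closed inv_alg_mult_closed
      inv_alg_scale_closed[OF assms(1)] idempotent_in_inv_alg[OF assms(2)] assms(3,4))

text \<open>Oriented left to right on left-associated words, these two rules delete every q after the
  first one: w q = w persists when a letter a of (A,q) is appended, since w a q = w (q a q) = w q a.\<close>

lemma idempotent_absorb_right:
  fixes q w :: "'a::semigroup_mult"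
  shows "q * q = q \<Longrightarrow> w * q * q = w * q"
  by (simp add: mult.assoc)

lemma inv_alg_absorb_right:
  assumes "w * q = w" and "a \<in> inv_alg q"
  shows "w * a * q = w * a"
proof -
  have "w * a * q = w * q * a * q" using assms(1) by simp
  also have "\<dots> = w * (q * a * q)" by (simp add: mult.assoc)
  also have "\<dots> = w * q * a" using assms(2) by (simp add: inv_alg_def mult.assoc)
  also have "\<dots> = w * a" using assms(1) by simp
  finally show ?thesis .
qed

lemma bracket4_leibniz:
  assumes "algebra_over s" and "q * q = q"
    and "x \<in> inv_alg q" and "y \<in> inv_alg q" and "z \<in> inv_alg q"
  shows "bracket4 s q k (bracket4 s q k x y) z =
           bracket4 s q k x (bracket4 s q k y z) + bracket4 s q k (bracket4 s q k x z) y"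
  using assms idempotent_in_inv_alg[OF assms(2)]
  unfolding bracket4_def
  by (simp add: algebra_over_scale_mult algebra_over_scale_add_diff ring_distribs
      mult.assoc[symmetric] idempotent_absorb_right inv_alg_absorb_right del: mult.assoc)

theorem proposition1p3:
  fixes s :: "'k::field \<Rightarrow> 'a::ring_1 \<Rightarrow> 'a" and q :: 'a and k :: 'k
  assumes "algebra_over s" and "q * q = q"
  shows "(\<forall>x\<in>inv_alg q. \<forall>y\<in>inv_alg q. bracket4 s q k x y \<in> inv_alg q) \<and>
         (\<forall>x\<in>inv_alg q. \<forall>y\<in>inv_alg q. \<forall>z\<in>inv_alg q.
            bracket4 s q k (bracket4 s q k x y) z =
              bracket4 s q k x (bracket4 s q k y z) + bracket4 s q k (bracket4 s q k x z) y)"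
  using bracket4_in_inv_alg[OF assms] bracket4_leibniz[OF assms] by blast

end
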